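(* There exists a unique algebra homomorphism $\sharp:\Re\to U(\mathfrak{sl}_2)$ that sends \[ A\mapsto \frac{(E+F-2)(E+F+2)}{16},\quad B\mapsto \frac{(H-2)(H+2)}{16},\quad C\mapsto \frac{(\mathbf i E-\mathbf i F-2)(\mathbf i E-\mathbf i F+2)}{16},\quad \Delta\mapsto \frac{(H+2)F^2-(H-2)E^2}{64}. \] Moreover $\sharp(\alpha)=\sharp(\beta)=\sharp(\gamma)=0$ and $\sharp(\delta)=\frac{\Lambda-6}{8}$.
   Context: All algebras are unital associative over $\mathbb C$, homomorphisms are unital, $[x,y]=xy-yx$, and $\mathbf i=\sqrt{-1}$. $U(\mathfrak{sl}_2)$ is the algebra generated by $E,F,H$ with relations $[H,E]=2E$, $[H,F]=-2F$, $[E,F]=H$; its Casimir element is $\Lambda=EF+FE+\frac{H^2}{2}$. The universal Racah algebra $\Re$ is the algebra generated by $A,B,C,\Delta$ with relations $[A,B]=[B,C]=[C,A]=2\Delta$ and such that each of $[A,\Delta]+AC-BA$, $[B,\Delta]+BA-CB$, $[C,\Delta]+CB-AC$ is central in $\Re$. Denote these three central elements by $\alpha,\beta,\gamma$ respectively, and let $\delta=A+B+C$ (which is central in $\Re$). *)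

theory Defs
  imports Complex_Main "HOL-Library.Poly_Mapping" "HOL-Algebra.QuotRing"
begin

instantiation list :: (type) monoid_add
begin
definition zero_list_def: "0 = []"
definition plus_list_def: "xs + ys = xs @ ys"
instance by standard (auto simp: zero_list_def plus_list_def)
end

text \<open>The free algebra \<open>\<complex>\<langle>g\<rangle>\<close>: finitely supported complex linear combinations of words,
  with convolution product (concatenation of words).\<close>
type_synonym 'g freealg = "'g list \<Rightarrow>\<^sub>0 complex"

definition free_ring :: "('g freealg) ring" where
  "free_ring = \<lparr>carrier = UNIV, mult = (*), one = 1, zero = 0, add = (+)\<rparr>"

definition gen :: "'g \<Rightarrow> 'g freealg" where
  "gen g = Poly_Mapping.single [g] 1"

definition scal :: "complex \<Rightarrow> 'g freealg" where
  "scal c = Poly_Mapping.single [] c"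

definition comm :: "'a::ring \<Rightarrow> 'a \<Rightarrow> 'a" where
  "comm x y = x * y - y * x"

definition pres_alg :: "'g freealg set \<Rightarrow> ('g freealg set) ring" where
  "pres_alg rels = free_ring Quot (genideal free_ring rels)"

definition cls :: "'g freealg set \<Rightarrow> 'g freealg \<Rightarrow> 'g freealg set" where
  "cls rels x = genideal free_ring rels +>\<^bsub>free_ring\<^esub> x"

text \<open>Unital \<open>\<complex>\<close>-algebra homomorphisms between presented algebras
  (ring homomorphisms compatible with the scalars; extensional so they are
  determined by their values on the carrier).\<close>
definition calg_hom :: "'g freealg set \<Rightarrow> 'h freealg set \<Rightarrow> ('g freealg set \<Rightarrow> 'h freealg set) \<Rightarrow> bool" where
  "calg_hom rels1 rels2 f \<longleftrightarrow>
     f \<in> ring_hom (pres_alg rels1) (pres_alg rels2) \<and>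
     f \<in> extensional (carrier (pres_alg rels1)) \<and>
     (\<forall>c. f (cls rels1 (scal c)) = cls rels2 (scal c))"

datatype sl2gen = GE | GF | GH

abbreviation "eE \<equiv> gen GE"
abbreviation "eF \<equiv> gen GF"
abbreviation "eH \<equiv> gen GH"

definition sl2_rels :: "sl2gen freealg set" where
  "sl2_rels = {comm eH eE - 2 * eE, comm eH eF + 2 * eF, comm eE eF - eH}"

abbreviation "Usl2 \<equiv> pres_alg sl2_rels"

definition casimir :: "sl2gen freealg" where
  "casimir = eE * eF + eF * eE + scal (1/2) * eH ^ 2"

datatype racahgen = RA | RB | RC | RD

abbreviation "rA \<equiv> gen RA"
abbreviation "rB \<equiv> gen RB"
abbreviation "rC \<equiv> gen RC"
abbreviation "rD \<equiv> gen RD"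

definition r_alpha :: "racahgen freealg" where
  "r_alpha = comm rA rD + rA * rC - rB * rA"
definition r_beta :: "racahgen freealg" where
  "r_beta = comm rB rD + rB * rA - rC * rB"
definition r_gamma :: "racahgen freealg" where
  "r_gamma = comm rC rD + rC * rB - rA * rC"
definition r_delta :: "racahgen freealg" where
  "r_delta = rA + rB + rC"

definition racah_rels :: "racahgen freealg set" where
  "racah_rels = {comm rA rB - 2 * rD, comm rB rC - 2 * rD, comm rC rA - 2 * rD}
     \<union> {comm r x | r x. r \<in> {r_alpha, r_beta, r_gamma}}"

abbreviation "Racah \<equiv> pres_alg racah_rels"

end

theory Submission
  imports Defs
begin

(* Sending A, B, C, \<Delta> to the given elements defines an algebra map from the free algebra into
   U(sl2); it descends to the Racah algebra because the images satisfy its relations, and the same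
   computation shows that \<alpha>, \<beta>, \<gamma> even go to 0 and \<delta> to (\<Lambda> - 6)/8. It is unique because the
   Racah algebra is generated by A, B, C, \<Delta>.
   After clearing the denominators 16 and 64 and using (\<i>E - \<i>F)^2 = -(E - F)^2, every identity
   needed is one between integer polynomials in E, F, H. Each is verified by rewriting it to the
   PBW normal form \<Sum> k E^a H^b F^c, with a normaliser proved correct in every ring satisfying the
   sl2 commutation relations. *)

section \<open>PBW normal forms\<close>

(* ((a,b,c),k) stands for k E^a H^b F^c, and a list for the sum of its terms. *)
type_synonym pbw = "((nat \<times> nat \<times> nat) \<times> int) list"

definition pbw_times_e :: "pbw \<Rightarrow> pbw" where
  "pbw_times_e l = map (\<lambda>((a,b,c),k). ((Suc a,b,c),k)) l"

definition pbw_smult :: "int \<Rightarrow> pbw \<Rightarrow> pbw" where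
  "pbw_smult k l = map (\<lambda>(m,j). (m, k * j)) l"

(* From H E = E (H + 2). *)
fun pbw_h_monom :: "nat \<Rightarrow> nat \<Rightarrow> nat \<Rightarrow> pbw" where
  "pbw_h_monom 0 b c = [((0,Suc b,c),1)]"
| "pbw_h_monom (Suc a) b c = pbw_times_e (pbw_h_monom a b c) @ [((Suc a,b,c),2)]"

definition pbw_times_h :: "pbw \<Rightarrow> pbw" where
  "pbw_times_h l = concat (map (\<lambda>((a,b,c),k). pbw_smult k (pbw_h_monom a b c)) l)"

(* From F E = E F - H and F H = (H + 2) F. *)
fun pbw_f_monom :: "nat \<Rightarrow> nat \<Rightarrow> nat \<Rightarrow> pbw" where
  "pbw_f_monom 0 0 c = [((0,0,Suc c),1)]"
| "pbw_f_monom 0 (Suc b) c = pbw_times_h (pbw_f_monom 0 b c) @ pbw_smult 2 (pbw_f_monom 0 b c)"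
| "pbw_f_monom (Suc a) b c = pbw_times_e (pbw_f_monom a b c) @ pbw_smult (-1) (pbw_h_monom a b c)"

definition pbw_times_f :: "pbw \<Rightarrow> pbw" where
  "pbw_times_f l = concat (map (\<lambda>((a,b,c),k). pbw_smult k (pbw_f_monom a b c)) l)"

definition pbw_coeff :: "pbw \<Rightarrow> nat \<times> nat \<times> nat \<Rightarrow> int" where
  "pbw_coeff l m = sum_list (map snd (filter (\<lambda>p. fst p = m) l))"

definition pbw_norm :: "pbw \<Rightarrow> pbw" where
  "pbw_norm l = filter (\<lambda>p. snd p \<noteq> 0) (map (\<lambda>m. (m, pbw_coeff l m)) (remdups (map fst l)))"

definition pbw_mult :: "pbw \<Rightarrow> pbw \<Rightarrow> pbw" where
  "pbw_mult l1 l2 = pbw_norm (concat (map (\<lambda>((a,b,c),k).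
     pbw_smult k ((pbw_times_e ^^ a) ((pbw_times_h ^^ b) ((pbw_times_f ^^ c) l2)))) l1))"

datatype sl2_expr = ExE | ExF | ExH | ExConst int
  | ExAdd sl2_expr sl2_expr | ExMul sl2_expr sl2_expr | ExNeg sl2_expr

fun pbw_of_expr :: "sl2_expr \<Rightarrow> pbw" where
  "pbw_of_expr ExE = [((1,0,0),1)]"
| "pbw_of_expr ExF = [((0,0,1),1)]"
| "pbw_of_expr ExH = [((0,1,0),1)]"
| "pbw_of_expr (ExConst k) = [((0,0,0),k)]"
| "pbw_of_expr (ExAdd x y) = pbw_of_expr x @ pbw_of_expr y"
| "pbw_of_expr (ExMul x y) = pbw_mult (pbw_of_expr x) (pbw_of_expr y)"
| "pbw_of_expr (ExNeg x) = pbw_smult (-1) (pbw_of_expr x)"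

lemma of_int_mult_left_commute: "of_int k * (x * y) = x * (of_int k * (y :: 'a::ring_1))"
  by (metis mult.assoc mult_of_int_commute)

locale sl2_triple =
  fixes e f h :: "'a::ring_1"
  assumes h_e: "h * e = e * h + 2 * e"
    and h_f: "h * f = f * h - 2 * f"
    and e_f: "e * f = f * e + h"
begin

definition pbw_monom :: "nat \<times> nat \<times> nat \<Rightarrow> 'a" where
  "pbw_monom m = (case m of (a,b,c) \<Rightarrow> e ^ a * h ^ b * f ^ c)"

definition pbw_val :: "pbw \<Rightarrow> 'a" where
  "pbw_val l = sum_list (map (\<lambda>(m,k). of_int k * pbw_monom m) l)"

lemma pbw_monom_Suc: "pbw_monom (Suc a, b, c) = e * pbw_monom (a,b,c)"
  by (simp add: pbw_monom_def mult.assoc)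

lemma pbw_val_Nil [simp]: "pbw_val [] = 0"
  by (simp add: pbw_val_def)

lemma pbw_val_Cons [simp]: "pbw_val (p # l) = of_int (snd p) * pbw_monom (fst p) + pbw_val l"
  by (simp add: pbw_val_def split: prod.splits)

lemma pbw_val_append [simp]: "pbw_val (l1 @ l2) = pbw_val l1 + pbw_val l2"
  by (induction l1) (auto simp: algebra_simps)

lemma pbw_val_smult: "pbw_val (pbw_smult k l) = of_int k * pbw_val l"
  by (induction l) (auto simp: pbw_smult_def distrib_left mult.assoc[symmetric])

lemma pbw_val_times_e: "pbw_val (pbw_times_e l) = e * pbw_val l"
proof (induction l)
  case (Cons p l)
  obtain a b c k where "p = ((a,b,c),k)" by (metis prod.exhaust)
  with Cons show ?case
    by (simp add: pbw_times_e_def pbw_monom_Suc distrib_left of_int_mult_left_commute)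
qed (simp add: pbw_times_e_def)

lemma pbw_val_h_monom: "pbw_val (pbw_h_monom a b c) = h * pbw_monom (a,b,c)"
proof (induction a)
  case 0
  then show ?case by (simp add: pbw_monom_def mult.assoc)
next
  case (Suc a)
  have "h * pbw_monom (Suc a, b, c) = (h * e) * pbw_monom (a,b,c)"
    by (simp add: pbw_monom_def mult.assoc)
  also have "\<dots> = e * (h * pbw_monom (a,b,c)) + 2 * pbw_monom (Suc a,b,c)"
    by (simp add: h_e pbw_monom_def algebra_simps)
  finally show ?case using Suc by (simp add: pbw_val_times_e)
qed

lemma pbw_val_times_h: "pbw_val (pbw_times_h l) = h * pbw_val l"
proof (induction l)
  case (Cons p l)
  obtain a b c k where "p = ((a,b,c),k)" by (metis prod.exhaust)
  with Cons show ?case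
    by (simp add: pbw_times_h_def pbw_val_smult pbw_val_h_monom distrib_left
        of_int_mult_left_commute)
qed (simp add: pbw_times_h_def)

lemma pbw_val_f_monom: "pbw_val (pbw_f_monom a b c) = f * pbw_monom (a,b,c)"
proof (induction a b c rule: pbw_f_monom.induct)
  case (1 c)
  then show ?case by (simp add: pbw_monom_def power_commutes)
next
  case (2 b c)
  have "f * pbw_monom (0, Suc b, c) = (h * f + 2 * f) * pbw_monom (0,b,c)"
    using h_f by (simp add: pbw_monom_def mult.assoc)
  then show ?case using 2 by (simp add: pbw_val_times_h pbw_val_smult distrib_right mult.assoc)
next
  case (3 a b c)
  have "f * pbw_monom (Suc a, b, c) = (e * f - h) * pbw_monom (a,b,c)"
    using e_f by (simp add: pbw_monom_def mult.assoc)
  then show ?case using 3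
    by (simp add: pbw_val_times_e pbw_val_smult pbw_val_h_monom left_diff_distrib mult.assoc)
qed

lemma pbw_val_times_f: "pbw_val (pbw_times_f l) = f * pbw_val l"
proof (induction l)
  case (Cons p l)
  obtain a b c k where "p = ((a,b,c),k)" by (metis prod.exhaust)
  with Cons show ?case
    by (simp add: pbw_times_f_def pbw_val_smult pbw_val_f_monom distrib_left
        of_int_mult_left_commute)
qed (simp add: pbw_times_f_def)

lemma pbw_val_eq_sum_coeff:
  assumes "finite S" and "fst ` set l \<subseteq> S"
  shows "pbw_val l = (\<Sum>m\<in>S. of_int (pbw_coeff l m) * pbw_monom m)"
  using assms(2)
proof (induction l)
  case Nil
  then show ?case by (simp add: pbw_coeff_def)
next
  case (Cons p l)
  have "of_int (pbw_coeff (p # l) m) * pbw_monom m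
      = of_int (pbw_coeff l m) * pbw_monom m + (if m = fst p then of_int (snd p) * pbw_monom m else 0)"
    for m by (simp add: pbw_coeff_def distrib_right)
  then have "(\<Sum>m\<in>S. of_int (pbw_coeff (p # l) m) * pbw_monom m)
      = (\<Sum>m\<in>S. of_int (pbw_coeff l m) * pbw_monom m)
        + (\<Sum>m\<in>S. if m = fst p then of_int (snd p) * pbw_monom m else 0)"
    by (simp add: sum.distrib)
  also have "\<dots> = pbw_val l + of_int (snd p) * pbw_monom (fst p)"
    using Cons assms(1) by (simp add: sum.delta)
  finally show ?case by (simp add: add.commute)
qed

lemma pbw_val_norm: "pbw_val (pbw_norm l) = pbw_val l"
proof -
  have filter_nonzero: "pbw_val (filter (\<lambda>p. snd p \<noteq> 0) l') = pbw_val l'" for l'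
    by (induction l') auto
  have "pbw_val (map (\<lambda>m. (m, g m)) L) = (\<Sum>m\<in>set L. of_int (g m) * pbw_monom m)"
    if "distinct L" for L and g :: "nat \<times> nat \<times> nat \<Rightarrow> int"
    using that by (induction L) auto
  then show ?thesis
    by (simp add: pbw_norm_def filter_nonzero pbw_val_eq_sum_coeff[of "fst ` set l" l])
qed

lemma pbw_val_mult: "pbw_val (pbw_mult l1 l2) = pbw_val l1 * pbw_val l2"
proof -
  have iterate: "pbw_val ((pbw_times_e ^^ a) ((pbw_times_h ^^ b) ((pbw_times_f ^^ c) l)))
      = pbw_monom (a,b,c) * pbw_val l" for a b c l
  proof -
    have "pbw_val ((pbw_times_f ^^ c) l) = f ^ c * pbw_val l" for l
      by (induction c) (auto simp: pbw_val_times_f mult.assoc)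
    moreover have "pbw_val ((pbw_times_h ^^ b) l) = h ^ b * pbw_val l" for l
      by (induction b) (auto simp: pbw_val_times_h mult.assoc)
    moreover have "pbw_val ((pbw_times_e ^^ a) l) = e ^ a * pbw_val l" for l
      by (induction a) (auto simp: pbw_val_times_e mult.assoc)
    ultimately show ?thesis by (simp add: pbw_monom_def mult.assoc)
  qed
  have "pbw_val (concat (map (\<lambda>((a,b,c),k).
      pbw_smult k ((pbw_times_e ^^ a) ((pbw_times_h ^^ b) ((pbw_times_f ^^ c) l2)))) l1))
      = pbw_val l1 * pbw_val l2"
  proof (induction l1)
    case (Cons p l)
    obtain a b c k where "p = ((a,b,c),k)" by (metis prod.exhaust)
    with Cons show ?case by (simp add: pbw_val_smult iterate algebra_simps)
  qed simp
  then show ?thesis by (simp add: pbw_mult_def pbw_val_norm)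
qed

primrec sl2_eval :: "sl2_expr \<Rightarrow> 'a" where
  "sl2_eval ExE = e"
| "sl2_eval ExF = f"
| "sl2_eval ExH = h"
| "sl2_eval (ExConst k) = of_int k"
| "sl2_eval (ExAdd x y) = sl2_eval x + sl2_eval y"
| "sl2_eval (ExMul x y) = sl2_eval x * sl2_eval y"
| "sl2_eval (ExNeg x) = - sl2_eval x"

lemma sl2_eval_eq_pbw_val: "sl2_eval x = pbw_val (pbw_of_expr x)"
  by (induction x) (simp_all add: pbw_monom_def pbw_val_mult pbw_val_smult)

lemma sl2_eval_eqI:
  assumes "pbw_norm (pbw_of_expr (ExAdd x (ExNeg y))) = []"
  shows "sl2_eval x = sl2_eval y"
proof -
  have "pbw_val (pbw_of_expr (ExAdd x (ExNeg y))) = 0"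
    by (metis assms pbw_val_Nil pbw_val_norm)
  then show ?thesis by (simp add: sl2_eval_eq_pbw_val pbw_val_smult)
qed

end

definition racah_a_expr :: sl2_expr where
  "racah_a_expr = ExMul (ExAdd (ExAdd ExE ExF) (ExNeg (ExConst 2))) (ExAdd (ExAdd ExE ExF) (ExConst 2))"

definition racah_b_expr :: sl2_expr where
  "racah_b_expr = ExMul (ExAdd ExH (ExNeg (ExConst 2))) (ExAdd ExH (ExConst 2))"

definition racah_c_expr :: sl2_expr where
  "racah_c_expr = ExAdd (ExNeg (ExMul (ExAdd ExE (ExNeg ExF)) (ExAdd ExE (ExNeg ExF)))) (ExNeg (ExConst 4))"

definition racah_d_expr :: sl2_expr where
  "racah_d_expr = ExAdd (ExMul (ExAdd ExH (ExConst 2)) (ExMul ExF ExF))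
     (ExNeg (ExMul (ExAdd ExH (ExNeg (ExConst 2))) (ExMul ExE ExE)))"

abbreviation ex_comm :: "sl2_expr \<Rightarrow> sl2_expr \<Rightarrow> sl2_expr" where
  "ex_comm x y \<equiv> ExAdd (ExMul x y) (ExNeg (ExMul y x))"

context sl2_triple
begin

(* 16 \<sharp>A, 16 \<sharp>B, 16 \<sharp>C and 64 \<sharp>\<Delta>. *)
definition racah_a :: 'a where "racah_a = (e + f - 2) * (e + f + 2)"
definition racah_b :: 'a where "racah_b = (h - 2) * (h + 2)"
definition racah_c :: 'a where "racah_c = - (e - f)\<^sup>2 - 4"
definition racah_d :: 'a where "racah_d = (h + 2) * f\<^sup>2 - (h - 2) * e\<^sup>2"

lemma sl2_eval_racah_exprs:
  "sl2_eval racah_a_expr = racah_a" "sl2_eval racah_b_expr = racah_b"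
  "sl2_eval racah_c_expr = racah_c" "sl2_eval racah_d_expr = racah_d"
  by (simp_all add: racah_a_expr_def racah_b_expr_def racah_c_expr_def racah_d_expr_def
      racah_a_def racah_b_def racah_c_def racah_d_def power2_eq_square)

lemma racah_comm_ab: "comm racah_a racah_b = 8 * racah_d"
proof -
  have "sl2_eval (ex_comm racah_a_expr racah_b_expr) = sl2_eval (ExMul (ExConst 8) racah_d_expr)"
    by (rule sl2_eval_eqI) code_simp
  then show ?thesis by (simp add: sl2_eval_racah_exprs comm_def)
qed

lemma racah_comm_bc: "comm racah_b racah_c = 8 * racah_d"
proof -
  have "sl2_eval (ex_comm racah_b_expr racah_c_expr) = sl2_eval (ExMul (ExConst 8) racah_d_expr)"
    by (rule sl2_eval_eqI) code_simp
  then show ?thesis by (simp add: sl2_eval_racah_exprs comm_def)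
qed

lemma racah_comm_ca: "comm racah_c racah_a = 8 * racah_d"
proof -
  have "sl2_eval (ex_comm racah_c_expr racah_a_expr) = sl2_eval (ExMul (ExConst 8) racah_d_expr)"
    by (rule sl2_eval_eqI) code_simp
  then show ?thesis by (simp add: sl2_eval_racah_exprs comm_def)
qed

lemma racah_alpha_vanishes: "comm racah_a racah_d + 4 * (racah_a * racah_c - racah_b * racah_a) = 0"
proof -
  have "sl2_eval (ExAdd (ex_comm racah_a_expr racah_d_expr)
      (ExMul (ExConst 4) (ExAdd (ExMul racah_a_expr racah_c_expr) (ExNeg (ExMul racah_b_expr racah_a_expr)))))
      = sl2_eval (ExConst 0)"
    by (rule sl2_eval_eqI) code_simp
  then show ?thesis by (simp add: sl2_eval_racah_exprs comm_def)
qed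

lemma racah_beta_vanishes: "comm racah_b racah_d + 4 * (racah_b * racah_a - racah_c * racah_b) = 0"
proof -
  have "sl2_eval (ExAdd (ex_comm racah_b_expr racah_d_expr)
      (ExMul (ExConst 4) (ExAdd (ExMul racah_b_expr racah_a_expr) (ExNeg (ExMul racah_c_expr racah_b_expr)))))
      = sl2_eval (ExConst 0)"
    by (rule sl2_eval_eqI) code_simp
  then show ?thesis by (simp add: sl2_eval_racah_exprs comm_def)
qed

lemma racah_gamma_vanishes: "comm racah_c racah_d + 4 * (racah_c * racah_b - racah_a * racah_c) = 0"
proof -
  have "sl2_eval (ExAdd (ex_comm racah_c_expr racah_d_expr)
      (ExMul (ExConst 4) (ExAdd (ExMul racah_c_expr racah_b_expr) (ExNeg (ExMul racah_a_expr racah_c_expr)))))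
      = sl2_eval (ExConst 0)"
    by (rule sl2_eval_eqI) code_simp
  then show ?thesis by (simp add: sl2_eval_racah_exprs comm_def)
qed

lemma racah_sum_abc: "racah_a + racah_b + racah_c = 2 * (e * f + f * e) + h\<^sup>2 - 12"
proof -
  have "sl2_eval (ExAdd (ExAdd racah_a_expr racah_b_expr) racah_c_expr)
      = sl2_eval (ExAdd (ExAdd (ExMul (ExConst 2) (ExAdd (ExMul ExE ExF) (ExMul ExF ExE))) (ExMul ExH ExH))
          (ExNeg (ExConst 12)))"
    by (rule sl2_eval_eqI) code_simp
  then show ?thesis by (simp add: sl2_eval_racah_exprs power2_eq_square)
qed

end

section \<open>Free algebras\<close>

definition class_ring :: "('a::ring_1) ring" where
  "class_ring = \<lparr>carrier = UNIV, mult = (*), one = 1, zero = 0, add = (+)\<rparr>"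

lemma class_ring_simps [simp]:
  "carrier (class_ring :: 'a::ring_1 ring) = UNIV"
  "mult (class_ring :: 'a::ring_1 ring) = (*)"
  "one (class_ring :: 'a::ring_1 ring) = 1"
  "zero (class_ring :: 'a::ring_1 ring) = 0"
  "add (class_ring :: 'a::ring_1 ring) = (+)"
  by (simp_all add: class_ring_def)

lemma ring_class_ring: "ring (class_ring :: 'a::ring_1 ring)"
proof (rule ringI)
  show "abelian_group (class_ring :: 'a ring)"
    by (rule abelian_groupI) (auto simp: algebra_simps intro: exI[of _ "- x" for x])
  show "monoid (class_ring :: 'a ring)"
    by (rule monoidI) (auto simp: mult.assoc)
qed (auto simp: algebra_simps)

lemma free_ring_eq_class_ring: "free_ring = class_ring"
  by (simp add: free_ring_def class_ring_def)

lemma ring_free_ring: "ring free_ring"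
  by (simp add: free_ring_eq_class_ring ring_class_ring)

lemma free_ring_simps [simp]:
  "carrier free_ring = UNIV" "mult free_ring = (*)" "one free_ring = 1"
  "zero free_ring = 0" "add free_ring = (+)"
  by (simp_all add: free_ring_def)

lemma Nil_eq_zero: "([] :: 'g list) = 0"
  by (simp add: zero_list_def)

lemma scal_0 [simp]: "scal 0 = 0"
  by (simp add: scal_def)

lemma scal_1 [simp]: "scal 1 = 1"
  by (simp add: scal_def Nil_eq_zero)

lemma scal_add: "scal (a + b) = scal a + scal b"
  by (simp add: scal_def single_add)

lemma scal_mult: "scal (a * b) = scal a * scal b"
  by (simp add: scal_def mult_single Nil_eq_zero)

lemma scal_numeral: "scal (numeral n) = numeral n"
  by (simp add: scal_def Nil_eq_zero)

lemma single_mult_single: "Poly_Mapping.single v a * Poly_Mapping.single w b = Poly_Mapping.single (v @ w) (a * b)"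
  by (simp add: mult_single plus_list_def)

lemma update_eq_plus_single:
  "a \<notin> Poly_Mapping.keys p \<Longrightarrow> Poly_Mapping.update a b p = p + Poly_Mapping.single a b"
  by (rule poly_mapping_eqI)
     (auto simp: lookup_update lookup_add lookup_single not_in_keys_iff_lookup_eq_zero when_def)

lemma scal_mult_commute: "scal c * p = p * (scal c :: 'g freealg)"
proof (induction p rule: update_induct)
  case (update p a b)
  then show ?case
    by (simp add: update_eq_plus_single distrib_left distrib_right scal_def single_mult_single
        mult.commute)
qed simp

lemma single_Cons_eq: "Poly_Mapping.single (x # w) (1::complex) = gen x * Poly_Mapping.single w 1"
  by (simp add: gen_def single_mult_single)

lemma single_eq_scal_mult: "Poly_Mapping.single w c = scal c * Poly_Mapping.single w 1"
  by (simp add: scal_def single_mult_single)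

lemma free_ring_hom_eqI:
  assumes hom1: "g1 \<in> ring_hom free_ring S" and hom2: "g2 \<in> ring_hom free_ring S"
    and gen: "\<And>a. g1 (gen a) = g2 (gen a)" and scal: "\<And>c. g1 (scal c) = g2 (scal c)"
  shows "g1 p = g2 p"
proof -
  have mult: "g (x * y) = g x \<otimes>\<^bsub>S\<^esub> g y" and add: "g (x + y) = g x \<oplus>\<^bsub>S\<^esub> g y"
    if "g \<in> ring_hom free_ring S" for g and x y :: "'a freealg"
    using ring_hom_memE[OF that] by simp_all
  have word: "g1 (Poly_Mapping.single w 1) = g2 (Poly_Mapping.single w 1)" for w
  proof (induction w)
    case Nil
    then show ?case using scal[of 1] by (simp add: scal_def)
  next
    case (Cons x w)
    then show ?case by (simp add: single_Cons_eq mult[OF hom1] mult[OF hom2] gen)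
  qed
  have monom: "g1 (Poly_Mapping.single w c) = g2 (Poly_Mapping.single w c)" for w c
    by (subst (1 2) single_eq_scal_mult) (simp add: mult[OF hom1] mult[OF hom2] scal word)
  show ?thesis
  proof (induction p rule: update_induct)
    case const
    then show ?case using scal[of 0] by simp
  next
    case (update p a b)
    then show ?case
      by (simp add: update_eq_plus_single add[OF hom1] add[OF hom2] monom)
  qed
qed

definition word_image :: "('g \<Rightarrow> 'b::ring_1) \<Rightarrow> 'g list \<Rightarrow> 'b" where
  "word_image \<phi> w = prod_list (map \<phi> w)"

definition free_lift :: "(complex \<Rightarrow> 'b::ring_1) \<Rightarrow> ('g \<Rightarrow> 'b) \<Rightarrow> 'g freealg \<Rightarrow> 'b" where
  "free_lift sc \<phi> p = (\<Sum>w\<in>Poly_Mapping.keys p. sc (Poly_Mapping.lookup p w) * word_image \<phi> w)"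

locale central_scalars =
  fixes sc :: "complex \<Rightarrow> 'b::ring_1"
  assumes sc_add: "sc (a + b) = sc a + sc b"
    and sc_mult: "sc (a * b) = sc a * sc b"
    and sc_1: "sc 1 = 1"
    and sc_central: "sc a * x = x * sc a"
begin

lemma sc_0: "sc 0 = 0"
  using sc_add[of 0 0] by simp

lemma sc_uminus: "sc (- a) = - sc a"
proof -
  have "sc a + sc (- a) = 0"
    using sc_add[of a "- a"] by (simp add: sc_0)
  then show ?thesis by (metis minus_unique)
qed

lemma free_lift_eq_sum_superset:
  assumes "finite S" and "Poly_Mapping.keys p \<subseteq> S"
  shows "free_lift sc \<phi> p = (\<Sum>w\<in>S. sc (Poly_Mapping.lookup p w) * word_image \<phi> w)"
  unfolding free_lift_def using assms
  by (intro sum.mono_neutral_left) (auto simp: in_keys_iff sc_0)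

lemma free_lift_add: "free_lift sc \<phi> (p + q) = free_lift sc \<phi> p + free_lift sc \<phi> q"
proof -
  let ?S = "Poly_Mapping.keys p \<union> Poly_Mapping.keys q"
  have "free_lift sc \<phi> (p + q) = (\<Sum>w\<in>?S. sc (Poly_Mapping.lookup (p + q) w) * word_image \<phi> w)"
    using keys_add[of p q] by (intro free_lift_eq_sum_superset) auto
  also have "\<dots> = (\<Sum>w\<in>?S. sc (Poly_Mapping.lookup p w) * word_image \<phi> w)
                + (\<Sum>w\<in>?S. sc (Poly_Mapping.lookup q w) * word_image \<phi> w)"
    by (simp add: lookup_add sc_add distrib_right sum.distrib)
  also have "\<dots> = free_lift sc \<phi> p + free_lift sc \<phi> q"
    by (simp add: free_lift_eq_sum_superset[symmetric])
  finally show ?thesis .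
qed

lemma free_lift_0 [simp]: "free_lift sc \<phi> 0 = 0"
  by (simp add: free_lift_def)

lemma free_lift_single: "free_lift sc \<phi> (Poly_Mapping.single w c) = sc c * word_image \<phi> w"
  by (cases "c = 0") (simp_all add: free_lift_def sc_0)

lemma free_lift_single_mult:
  "free_lift sc \<phi> (Poly_Mapping.single w c * q) = free_lift sc \<phi> (Poly_Mapping.single w c) * free_lift sc \<phi> q"
proof (induction q rule: update_induct)
  case (update q a b)
  have "sc (c * b) * word_image \<phi> (w @ a) = (sc c * word_image \<phi> w) * (sc b * word_image \<phi> a)"
    by (simp add: sc_mult word_image_def mult.assoc) (metis sc_central mult.assoc)
  with update show ?case
    by (simp add: update_eq_plus_single distrib_left free_lift_add single_mult_single free_lift_single)
qed simp

lemma free_lift_mult: "free_lift sc \<phi> (p * q) = free_lift sc \<phi> p * free_lift sc \<phi> q"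
proof (induction p rule: update_induct)
  case (update p a b)
  then show ?case
    by (simp add: update_eq_plus_single distrib_right free_lift_add free_lift_single_mult)
qed simp

lemma free_lift_scal: "free_lift sc \<phi> (scal c) = sc c"
  by (simp add: scal_def free_lift_single word_image_def)

lemma free_lift_1: "free_lift sc \<phi> 1 = 1"
  using free_lift_scal[of \<phi> 1] sc_1 by simp

lemma free_lift_gen: "free_lift sc \<phi> (gen a) = \<phi> a"
  by (simp add: gen_def free_lift_single word_image_def sc_1)

lemma free_lift_uminus: "free_lift sc \<phi> (- p) = - free_lift sc \<phi> p"
  using free_lift_add[of \<phi> p "- p"] by (simp add: eq_neg_iff_add_eq_0 add.commute)

lemma free_lift_diff: "free_lift sc \<phi> (p - q) = free_lift sc \<phi> p - free_lift sc \<phi> q"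
  using free_lift_add[of \<phi> p "- q"] by (simp add: free_lift_uminus)

lemma free_lift_comm: "free_lift sc \<phi> (comm p q) = comm (free_lift sc \<phi> p) (free_lift sc \<phi> q)"
  by (simp add: comm_def free_lift_diff free_lift_mult)

lemma free_lift_numeral: "free_lift sc \<phi> (numeral n) = numeral n"
proof -
  have "free_lift sc \<phi> (of_nat m) = of_nat m" for m
    by (induction m) (simp_all add: free_lift_add free_lift_1)
  from this[of "numeral n"] show ?thesis by simp
qed

lemma free_lift_ring_hom: "free_lift sc \<phi> \<in> ring_hom free_ring class_ring"
  by (rule ring_hom_memI) (simp_all add: free_lift_mult free_lift_add free_lift_1)

lemma free_lift_genideal_eq_0:
  assumes rels: "\<And>r. r \<in> rels \<Longrightarrow> free_lift sc \<phi> r = 0"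
    and x: "x \<in> genideal free_ring rels"
  shows "free_lift sc \<phi> x = 0"
proof -
  have "ring_hom_ring free_ring class_ring (free_lift sc \<phi>)"
    by (rule ring_hom_ringI2[OF ring_free_ring ring_class_ring free_lift_ring_hom])
  then have "genideal free_ring rels \<subseteq> a_kernel free_ring class_ring (free_lift sc \<phi>)"
    by (intro ring.genideal_minimal[OF ring_free_ring] ring_hom_ring.kernel_is_ideal)
       (auto simp: a_kernel_def' rels)
  with x show ?thesis by (auto simp: a_kernel_def')
qed

end

section \<open>Presented algebras\<close>

lemma genideal_ideal_free_ring: "ideal (genideal free_ring rels) free_ring"
  by (rule ring.genideal_ideal[OF ring_free_ring]) simp

lemma ring_pres_alg: "ring (pres_alg rels)"
  unfolding pres_alg_def by (rule ideal.quotient_is_ring[OF genideal_ideal_free_ring])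

lemma cls_ring_hom: "cls rels \<in> ring_hom free_ring (pres_alg rels)"
proof -
  have "cls rels = a_r_coset free_ring (genideal free_ring rels)"
    by (rule ext) (simp add: cls_def)
  then show ?thesis
    unfolding pres_alg_def by (simp add: ideal.rcos_ring_hom[OF genideal_ideal_free_ring])
qed

lemma carrier_pres_alg: "carrier (pres_alg rels) = range (cls rels)"
  by (auto simp: pres_alg_def FactRing_def A_RCOSETS_def' cls_def)

lemma cls_in_carrier: "cls rels x \<in> carrier (pres_alg rels)"
  by (simp add: carrier_pres_alg)

lemma cls_mult: "cls rels (x * y) = cls rels x \<otimes>\<^bsub>pres_alg rels\<^esub> cls rels y"
  using ring_hom_memE(2)[OF cls_ring_hom] by simp

lemma cls_add: "cls rels (x + y) = cls rels x \<oplus>\<^bsub>pres_alg rels\<^esub> cls rels y"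
  using ring_hom_memE(3)[OF cls_ring_hom] by simp

lemma cls_1: "cls rels 1 = \<one>\<^bsub>pres_alg rels\<^esub>"
  using ring_hom_memE(4)[OF cls_ring_hom] by simp

lemma zero_in_genideal: "0 \<in> genideal free_ring rels"
  using additive_subgroup.zero_closed[OF ideal.axioms(1)[OF genideal_ideal_free_ring]] by simp

lemma cls_0: "cls rels 0 = genideal free_ring rels"
  unfolding cls_def by (rule ring.a_rcos_zero[OF ring_free_ring genideal_ideal_free_ring zero_in_genideal])

lemma zero_pres_alg: "\<zero>\<^bsub>pres_alg rels\<^esub> = cls rels 0"
  by (simp add: cls_0 pres_alg_def FactRing_def)

lemma cls_uminus: "\<ominus>\<^bsub>pres_alg rels\<^esub> cls rels x = cls rels (- x)"
proof -
  interpret Q: ring "pres_alg rels" by (rule ring_pres_alg)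
  show ?thesis
    by (rule Q.minus_equality) (simp_all add: cls_add[symmetric] cls_in_carrier zero_pres_alg)
qed

lemma cls_eq_0I: "x \<in> genideal free_ring rels \<Longrightarrow> cls rels x = cls rels 0"
  unfolding cls_0 by (simp add: cls_def ring.a_rcos_zero[OF ring_free_ring genideal_ideal_free_ring])

lemma cls_rel: "r \<in> rels \<Longrightarrow> cls rels r = cls rels 0"
  using ring.genideal_self[OF ring_free_ring, of rels] by (intro cls_eq_0I) auto

lemma mem_cls_self: "x \<in> cls rels x"
proof -
  have "abelian_subgroup (genideal free_ring rels) free_ring"
    by (rule abelian_subgroupI3[OF ideal.axioms(1)[OF genideal_ideal_free_ring]
          ring.is_abelian_group[OF ring_free_ring]])
  then show ?thesis by (simp add: cls_def abelian_subgroup.a_rcos_self)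
qed

lemma calg_hom_eqI:
  assumes f: "calg_hom rels1 rels2 f" and g: "calg_hom rels1 rels2 g"
    and gen: "\<And>a. f (cls rels1 (gen a)) = g (cls rels1 (gen a))"
  shows "f = g"
proof (rule extensionalityI)
  show "f \<in> extensional (carrier (pres_alg rels1))" "g \<in> extensional (carrier (pres_alg rels1))"
    using f g by (simp_all add: calg_hom_def)
  fix X assume "X \<in> carrier (pres_alg rels1)"
  then obtain x where X: "X = cls rels1 x" by (auto simp: carrier_pres_alg)
  have "(f \<circ> cls rels1) x = (g \<circ> cls rels1) x"
  proof (rule free_ring_hom_eqI)
    show "f \<circ> cls rels1 \<in> ring_hom free_ring (pres_alg rels2)"
      and "g \<circ> cls rels1 \<in> ring_hom free_ring (pres_alg rels2)"
      using f g by (auto simp: calg_hom_def intro: ring_hom_trans[OF cls_ring_hom])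
    show "(f \<circ> cls rels1) (gen a) = (g \<circ> cls rels1) (gen a)" for a
      using gen by simp
    show "(f \<circ> cls rels1) (scal c) = (g \<circ> cls rels1) (scal c)" for c
      using f g by (simp add: calg_hom_def)
  qed
  then show "f X = g X" by (simp add: X)
qed

definition quot_lift :: "'g freealg set \<Rightarrow> ('g freealg \<Rightarrow> 'b) \<Rightarrow> 'g freealg set \<Rightarrow> 'b" where
  "quot_lift rels g = (\<lambda>X \<in> carrier (pres_alg rels). the_elem (g ` X))"

lemma quot_lift_cls:
  assumes S: "ring S" and g: "g \<in> ring_hom free_ring S"
    and vanish: "\<And>x. x \<in> genideal free_ring rels \<Longrightarrow> g x = \<zero>\<^bsub>S\<^esub>"
  shows "quot_lift rels g (cls rels x) = g x"
proof -
  have "g (i + x) = g x" if "i \<in> genideal free_ring rels" for i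
    using ring_hom_memE(1,3)[OF g] vanish[OF that] ring.ring_simprules(8)[OF S] by simp
  then have "g ` cls rels x = {g x}"
    using zero_in_genideal[of rels] by (auto simp: cls_def a_r_coset_def')
  then show ?thesis by (simp add: quot_lift_def cls_in_carrier)
qed

lemma calg_hom_quot_lift:
  assumes g: "g \<in> ring_hom free_ring (pres_alg rels2)"
    and vanish: "\<And>x. x \<in> genideal free_ring rels1 \<Longrightarrow> g x = \<zero>\<^bsub>pres_alg rels2\<^esub>"
    and scal: "\<And>c. g (scal c) = cls rels2 (scal c)"
  shows "calg_hom rels1 rels2 (quot_lift rels1 g)"
proof -
  have lift: "quot_lift rels1 g (cls rels1 x) = g x" for x
    by (rule quot_lift_cls[OF ring_pres_alg g vanish])
  have "quot_lift rels1 g \<in> ring_hom (pres_alg rels1) (pres_alg rels2)"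
  proof (rule ring_hom_memI)
    fix X Y assume "X \<in> carrier (pres_alg rels1)" "Y \<in> carrier (pres_alg rels1)"
    then obtain x y where "X = cls rels1 x" "Y = cls rels1 y" by (auto simp: carrier_pres_alg)
    then show "quot_lift rels1 g (X \<otimes>\<^bsub>pres_alg rels1\<^esub> Y)
          = quot_lift rels1 g X \<otimes>\<^bsub>pres_alg rels2\<^esub> quot_lift rels1 g Y"
      and "quot_lift rels1 g (X \<oplus>\<^bsub>pres_alg rels1\<^esub> Y)
          = quot_lift rels1 g X \<oplus>\<^bsub>pres_alg rels2\<^esub> quot_lift rels1 g Y"
      using ring_hom_memE[OF g] by (simp_all add: cls_mult[symmetric] cls_add[symmetric] lift)
  next
    fix X assume "X \<in> carrier (pres_alg rels1)"
    then show "quot_lift rels1 g X \<in> carrier (pres_alg rels2)"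
      using ring_hom_memE(1)[OF g] by (auto simp: carrier_pres_alg lift)
  next
    show "quot_lift rels1 g \<one>\<^bsub>pres_alg rels1\<^esub> = \<one>\<^bsub>pres_alg rels2\<^esub>"
      using ring_hom_memE(4)[OF g] by (simp add: cls_1[symmetric] lift)
  qed
  moreover have "quot_lift rels1 g \<in> extensional (carrier (pres_alg rels1))"
    by (simp add: quot_lift_def)
  ultimately show ?thesis
    by (simp add: calg_hom_def lift scal)
qed

section \<open>U(sl2) as a ring type\<close>

interpretation complex_scalars: central_scalars "id :: complex \<Rightarrow> complex"
  by unfold_locales (simp_all add: mult.commute)

(* The class ring_1 demands 0 \<noteq> 1 in U(sl2); the counit E, F, H \<mapsto> 0 witnesses it. *)
lemma cls_sl2_0_neq_1: "cls sl2_rels 0 \<noteq> cls sl2_rels 1"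
proof
  let ?counit = "free_lift id (\<lambda>_::sl2gen. 0 :: complex)"
  assume "cls sl2_rels 0 = cls sl2_rels 1"
  then have "1 \<in> genideal free_ring sl2_rels"
    using mem_cls_self[of 1 sl2_rels] by (simp add: cls_0)
  moreover have "?counit r = 0" if "r \<in> sl2_rels" for r
    using that
    by (auto simp: sl2_rels_def comm_def complex_scalars.free_lift_diff complex_scalars.free_lift_mult
        complex_scalars.free_lift_gen complex_scalars.free_lift_add complex_scalars.free_lift_numeral)
  ultimately have "?counit 1 = 0"
    by (rule complex_scalars.free_lift_genideal_eq_0[rotated])
  then show False by (simp add: complex_scalars.free_lift_1)
qed

typedef usl2 = "carrier Usl2"
  by (auto simp: carrier_pres_alg)

definition usl2_of :: "sl2gen freealg \<Rightarrow> usl2" where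
  "usl2_of x = Abs_usl2 (cls sl2_rels x)"

lemma Rep_usl2_of: "Rep_usl2 (usl2_of x) = cls sl2_rels x"
  by (simp add: usl2_of_def Abs_usl2_inverse cls_in_carrier)

lemma usl2_of_surj: "\<exists>x. u = usl2_of x"
proof -
  obtain x where "Rep_usl2 u = cls sl2_rels x"
    using Rep_usl2[of u] by (auto simp: carrier_pres_alg)
  then show ?thesis by (metis Rep_usl2_inverse usl2_of_def)
qed

lemma usl2_of_induct: "(\<And>x. P (usl2_of x)) \<Longrightarrow> P u"
  using usl2_of_surj[of u] by auto

instantiation usl2 :: ring_1
begin

definition zero_usl2_def: "0 = usl2_of 0"
definition one_usl2_def: "1 = usl2_of 1"
definition plus_usl2_def: "u + v = Abs_usl2 (Rep_usl2 u \<oplus>\<^bsub>Usl2\<^esub> Rep_usl2 v)"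
definition times_usl2_def: "u * v = Abs_usl2 (Rep_usl2 u \<otimes>\<^bsub>Usl2\<^esub> Rep_usl2 v)"
definition uminus_usl2_def: "- u = Abs_usl2 (\<ominus>\<^bsub>Usl2\<^esub> Rep_usl2 u)"
definition minus_usl2_def: "u - v = u + - (v :: usl2)"

lemma usl2_of_add: "usl2_of (x + y) = usl2_of x + usl2_of y"
  unfolding plus_usl2_def Rep_usl2_of by (simp add: cls_add usl2_of_def)

lemma usl2_of_mult: "usl2_of (x * y) = usl2_of x * usl2_of y"
  unfolding times_usl2_def Rep_usl2_of by (simp add: cls_mult usl2_of_def)

lemma usl2_of_uminus: "usl2_of (- x) = - usl2_of x"
  unfolding uminus_usl2_def Rep_usl2_of by (simp add: cls_uminus usl2_of_def)

instance
proof
  fix u v w :: usl2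
  show "u + v + w = u + (v + w)"
    by (induct u rule: usl2_of_induct, induct v rule: usl2_of_induct, induct w rule: usl2_of_induct)
       (simp add: usl2_of_add[symmetric] add.assoc)
  show "u + v = v + u"
    by (induct u rule: usl2_of_induct, induct v rule: usl2_of_induct)
       (simp add: usl2_of_add[symmetric] add.commute)
  show "0 + u = u"
    by (induct u rule: usl2_of_induct) (simp add: zero_usl2_def usl2_of_add[symmetric])
  show "- u + u = 0"
    by (induct u rule: usl2_of_induct)
       (simp add: zero_usl2_def usl2_of_add[symmetric] usl2_of_uminus[symmetric])
  show "u - v = u + - v"
    by (simp add: minus_usl2_def)
  show "u * v * w = u * (v * w)"
    by (induct u rule: usl2_of_induct, induct v rule: usl2_of_induct, induct w rule: usl2_of_induct)
       (simp add: usl2_of_mult[symmetric] mult.assoc)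
  show "1 * u = u" "u * 1 = u"
    by (induct u rule: usl2_of_induct, simp add: one_usl2_def usl2_of_mult[symmetric])+
  show "(u + v) * w = u * w + v * w" "u * (v + w) = u * v + u * w"
    by (induct u rule: usl2_of_induct, induct v rule: usl2_of_induct, induct w rule: usl2_of_induct,
        simp add: usl2_of_mult[symmetric] usl2_of_add[symmetric] algebra_simps)+
  show "(0::usl2) \<noteq> 1"
    using cls_sl2_0_neq_1 by (metis Rep_usl2_of zero_usl2_def one_usl2_def)
qed

end

lemma usl2_of_diff: "usl2_of (x - y) = usl2_of x - usl2_of y"
  by (simp add: minus_usl2_def usl2_of_add[symmetric] usl2_of_uminus[symmetric])

lemma usl2_of_1: "usl2_of 1 = 1"
  by (simp add: one_usl2_def)

lemma usl2_of_numeral: "usl2_of (numeral n) = numeral n"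
proof -
  have "usl2_of (of_nat m) = of_nat m" for m
    by (induction m) (simp_all add: zero_usl2_def usl2_of_1 usl2_of_add)
  from this[of "numeral n"] show ?thesis by simp
qed

lemma usl2_of_power: "usl2_of (x ^ n) = usl2_of x ^ n"
  by (induction n) (simp_all add: usl2_of_1 usl2_of_mult)

lemma Rep_usl2_ring_hom: "Rep_usl2 \<in> ring_hom class_ring Usl2"
proof (rule ring_hom_memI)
  fix u v :: usl2
  show "Rep_usl2 u \<in> carrier Usl2" by (rule Rep_usl2)
  show "Rep_usl2 (u \<otimes>\<^bsub>class_ring\<^esub> v) = Rep_usl2 u \<otimes>\<^bsub>Usl2\<^esub> Rep_usl2 v"
    by (induct u rule: usl2_of_induct, induct v rule: usl2_of_induct)
       (simp add: usl2_of_mult[symmetric] Rep_usl2_of cls_mult)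
  show "Rep_usl2 (u \<oplus>\<^bsub>class_ring\<^esub> v) = Rep_usl2 u \<oplus>\<^bsub>Usl2\<^esub> Rep_usl2 v"
    by (induct u rule: usl2_of_induct, induct v rule: usl2_of_induct)
       (simp add: usl2_of_add[symmetric] Rep_usl2_of cls_add)
  show "Rep_usl2 \<one>\<^bsub>class_ring\<^esub> = \<one>\<^bsub>Usl2\<^esub>"
    by (simp add: usl2_of_1[symmetric] Rep_usl2_of cls_1)
qed

lemma usl2_of_rel:
  assumes "x - y \<in> sl2_rels"
  shows "usl2_of x = usl2_of y"
proof -
  have "usl2_of (x - y) = 0"
    using cls_rel[OF assms] by (simp add: usl2_of_def zero_usl2_def)
  then show ?thesis by (simp add: usl2_of_diff)
qed

interpretation usl2: sl2_triple "usl2_of eE" "usl2_of eF" "usl2_of eH"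
proof
  show "usl2_of eH * usl2_of eE = usl2_of eE * usl2_of eH + 2 * usl2_of eE"
    using usl2_of_rel[of "eH * eE" "eE * eH + 2 * eE"]
    by (simp add: sl2_rels_def comm_def diff_diff_eq usl2_of_add usl2_of_mult usl2_of_numeral)
  show "usl2_of eH * usl2_of eF = usl2_of eF * usl2_of eH - 2 * usl2_of eF"
    using usl2_of_rel[of "eH * eF" "eF * eH - 2 * eF"]
    by (simp add: sl2_rels_def comm_def diff_diff_eq2 usl2_of_diff usl2_of_mult usl2_of_numeral)
  show "usl2_of eE * usl2_of eF = usl2_of eF * usl2_of eE + usl2_of eH"
    using usl2_of_rel[of "eE * eF" "eF * eE + eH"]
    by (simp add: sl2_rels_def comm_def diff_diff_eq usl2_of_add usl2_of_mult)
qed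

section \<open>The homomorphism\<close>

definition usl2_scal :: "complex \<Rightarrow> usl2" where
  "usl2_scal c = usl2_of (scal c)"

interpretation usl2_scalars: central_scalars usl2_scal
proof
  show "usl2_scal (a + b) = usl2_scal a + usl2_scal b" for a b
    by (simp add: usl2_scal_def scal_add usl2_of_add)
  show "usl2_scal (a * b) = usl2_scal a * usl2_scal b" for a b
    by (simp add: usl2_scal_def scal_mult usl2_of_mult)
  show "usl2_scal 1 = 1"
    by (simp add: usl2_scal_def usl2_of_1)
  show "usl2_scal a * u = u * usl2_scal a" for a u
    by (induct u rule: usl2_of_induct) (simp add: usl2_scal_def usl2_of_mult[symmetric] scal_mult_commute)
qed

lemma usl2_scal_numeral: "usl2_scal (numeral n) = numeral n"
  by (simp add: usl2_scal_def scal_numeral usl2_of_numeral)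

lemma usl2_scal_mult_mult: "usl2_scal p * u * (usl2_scal q * v) = usl2_scal (p * q) * (u * v)"
  by (metis mult.assoc usl2_scalars.sc_central usl2_scalars.sc_mult)

lemma comm_usl2_scal_mult: "comm (usl2_scal p * u) (usl2_scal q * v) = usl2_scal (p * q) * comm u v"
  by (simp add: comm_def usl2_scal_mult_mult mult.commute right_diff_distrib)

lemma usl2_scal_mult_numeral: "usl2_scal p * (numeral n * u) = usl2_scal (p * numeral n) * u"
  by (simp add: usl2_scalars.sc_mult usl2_scal_numeral mult.assoc)

fun sharp_gen :: "racahgen \<Rightarrow> usl2" where
  "sharp_gen RA = usl2_of (scal (1/16) * ((eE + eF - 2) * (eE + eF + 2)))"
| "sharp_gen RB = usl2_of (scal (1/16) * ((eH - 2) * (eH + 2)))"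
| "sharp_gen RC = usl2_of (scal (1/16) * ((scal \<i> * eE - scal \<i> * eF - 2) * (scal \<i> * eE - scal \<i> * eF + 2)))"
| "sharp_gen RD = usl2_of (scal (1/64) * ((eH + 2) * eF ^ 2 - (eH - 2) * eE ^ 2))"

lemma sharp_gen_eq_racah:
  "sharp_gen RA = usl2_scal (1/16) * usl2.racah_a"
  "sharp_gen RB = usl2_scal (1/16) * usl2.racah_b"
  "sharp_gen RC = usl2_scal (1/16) * usl2.racah_c"
  "sharp_gen RD = usl2_scal (1/64) * usl2.racah_d"
proof -
  let ?e = "usl2_of eE" and ?f = "usl2_of eF"
  have square_i: "(usl2_scal \<i> * ?e - usl2_scal \<i> * ?f)\<^sup>2 = - (?e - ?f)\<^sup>2"
    by (simp add: right_diff_distrib[symmetric] power2_eq_square usl2_scal_mult_mult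
        usl2_scalars.sc_uminus usl2_scalars.sc_1)
  have "(x - 2) * (x + 2) = x\<^sup>2 - (4 :: usl2)" for x
    by (simp add: algebra_simps power2_eq_square mult_2 mult_2_right)
  with square_i show "sharp_gen RC = usl2_scal (1/16) * usl2.racah_c"
    by (simp add: usl2.racah_c_def usl2_scal_def usl2_of_mult usl2_of_add usl2_of_diff usl2_of_numeral)
qed (simp_all add: usl2.racah_a_def usl2.racah_b_def usl2.racah_d_def usl2_scal_def
    usl2_of_mult usl2_of_add usl2_of_diff usl2_of_numeral usl2_of_power)

abbreviation sharp :: "racahgen freealg \<Rightarrow> usl2" where
  "sharp \<equiv> free_lift usl2_scal sharp_gen"

lemma scaled_comm_eq:
  assumes "comm a b = 8 * d"
  shows "comm (usl2_scal (1/16) * a) (usl2_scal (1/16) * b) = 2 * (usl2_scal (1/64) * d)"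
  by (simp add: comm_usl2_scal_mult assms usl2_scal_mult_numeral mult.assoc[symmetric]
      usl2_scal_numeral[symmetric] usl2_scalars.sc_mult[symmetric])

lemma scaled_central_eq_0:
  assumes "comm a d + 4 * (a * c - b * a) = 0"
  shows "comm (usl2_scal (1/16) * a) (usl2_scal (1/64) * d)
       + usl2_scal (1/16) * a * (usl2_scal (1/16) * c) - usl2_scal (1/16) * b * (usl2_scal (1/16) * a) = 0"
proof -
  have "comm (usl2_scal (1/16) * a) (usl2_scal (1/64) * d)
       + usl2_scal (1/16) * a * (usl2_scal (1/16) * c) - usl2_scal (1/16) * b * (usl2_scal (1/16) * a)
      = usl2_scal (1/1024) * (comm a d + 4 * (a * c - b * a))"
    by (simp add: comm_usl2_scal_mult usl2_scal_mult_mult usl2_scal_mult_numeral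
        distrib_left right_diff_distrib add_diff_eq)
  with assms show ?thesis by simp
qed

lemmas sharp_simps = usl2_scalars.free_lift_add usl2_scalars.free_lift_diff
  usl2_scalars.free_lift_mult usl2_scalars.free_lift_comm usl2_scalars.free_lift_numeral
  usl2_scalars.free_lift_gen

lemma sharp_r_alpha: "sharp r_alpha = 0"
  unfolding r_alpha_def sharp_simps sharp_gen_eq_racah
  by (rule scaled_central_eq_0[OF usl2.racah_alpha_vanishes])

lemma sharp_r_beta: "sharp r_beta = 0"
  unfolding r_beta_def sharp_simps sharp_gen_eq_racah
  by (rule scaled_central_eq_0[OF usl2.racah_beta_vanishes])

lemma sharp_r_gamma: "sharp r_gamma = 0"
  unfolding r_gamma_def sharp_simps sharp_gen_eq_racah
  by (rule scaled_central_eq_0[OF usl2.racah_gamma_vanishes])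

lemma sharp_racah_rels: "r \<in> racah_rels \<Longrightarrow> sharp r = 0"
  unfolding racah_rels_def
  using sharp_r_alpha sharp_r_beta sharp_r_gamma
    scaled_comm_eq[OF usl2.racah_comm_ab] scaled_comm_eq[OF usl2.racah_comm_bc]
    scaled_comm_eq[OF usl2.racah_comm_ca]
  by (auto simp: sharp_simps sharp_gen_eq_racah comm_def simp del: sharp_gen.simps)

lemma sharp_r_delta: "sharp r_delta = usl2_of (scal (1/8) * (casimir - 6))"
proof -
  let ?e = "usl2_of eE" and ?f = "usl2_of eF" and ?h = "usl2_of eH"
  have "sharp r_delta = usl2_scal (1/16) * (usl2.racah_a + usl2.racah_b + usl2.racah_c)"
    by (simp add: r_delta_def sharp_simps sharp_gen_eq_racah distrib_left del: sharp_gen.simps)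
  also have "\<dots> = usl2_scal (1/16) * (2 * (?e * ?f + ?f * ?e) + ?h\<^sup>2 - 12)"
    by (simp add: usl2.racah_sum_abc)
  also have "\<dots> = usl2_scal (1/8) * (?e * ?f + ?f * ?e + usl2_scal (1/2) * ?h\<^sup>2 - 6)"
    by (simp add: distrib_left right_diff_distrib usl2_scal_numeral[symmetric] mult.assoc[symmetric]
        usl2_scalars.sc_mult[symmetric])
  also have "\<dots> = usl2_of (scal (1/8) * (casimir - 6))"
    by (simp add: casimir_def usl2_scal_def usl2_of_mult usl2_of_add usl2_of_diff usl2_of_numeral
        usl2_of_power)
  finally show ?thesis .
qed

definition racah_sharp :: "racahgen freealg set \<Rightarrow> sl2gen freealg set" where
  "racah_sharp = quot_lift racah_rels (Rep_usl2 \<circ> sharp)"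

lemma Rep_usl2_sharp_ring_hom: "Rep_usl2 \<circ> sharp \<in> ring_hom free_ring Usl2"
  by (rule ring_hom_trans[OF usl2_scalars.free_lift_ring_hom Rep_usl2_ring_hom])

lemma Rep_usl2_sharp_genideal:
  "x \<in> genideal free_ring racah_rels \<Longrightarrow> (Rep_usl2 \<circ> sharp) x = \<zero>\<^bsub>Usl2\<^esub>"
  by (simp add: usl2_scalars.free_lift_genideal_eq_0[OF sharp_racah_rels] zero_pres_alg
      zero_usl2_def Rep_usl2_of)

lemma racah_sharp_cls: "racah_sharp (cls racah_rels x) = Rep_usl2 (sharp x)"
proof -
  have "quot_lift racah_rels (Rep_usl2 \<circ> sharp) (cls racah_rels x) = (Rep_usl2 \<circ> sharp) x"
    by (rule quot_lift_cls[OF ring_pres_alg Rep_usl2_sharp_ring_hom Rep_usl2_sharp_genideal])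
  then show ?thesis by (simp add: racah_sharp_def)
qed

lemma Rep_usl2_sharp_scal: "Rep_usl2 (sharp (scal c)) = cls sl2_rels (scal c)"
  by (simp add: usl2_scalars.free_lift_scal usl2_scal_def Rep_usl2_of)

lemma calg_hom_racah_sharp: "calg_hom racah_rels sl2_rels racah_sharp"
  unfolding racah_sharp_def
proof (rule calg_hom_quot_lift)
  show "Rep_usl2 \<circ> sharp \<in> ring_hom free_ring Usl2"
    by (rule Rep_usl2_sharp_ring_hom)
  show "(Rep_usl2 \<circ> sharp) x = \<zero>\<^bsub>Usl2\<^esub>" if "x \<in> genideal free_ring racah_rels" for x
    using that by (rule Rep_usl2_sharp_genideal)
  show "(Rep_usl2 \<circ> sharp) (scal c) = cls sl2_rels (scal c)" for c
    by (simp add: Rep_usl2_sharp_scal)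
qed

theorem theorem1p3:
  shows "(\<exists>!f. calg_hom racah_rels sl2_rels f
            \<and> f (cls racah_rels rA) = cls sl2_rels (scal (1/16) * ((eE + eF - 2) * (eE + eF + 2)))
            \<and> f (cls racah_rels rB) = cls sl2_rels (scal (1/16) * ((eH - 2) * (eH + 2)))
            \<and> f (cls racah_rels rC) = cls sl2_rels (scal (1/16) *
                 ((scal \<i> * eE - scal \<i> * eF - 2) * (scal \<i> * eE - scal \<i> * eF + 2)))
            \<and> f (cls racah_rels rD) = cls sl2_rels (scal (1/64) *
                 ((eH + 2) * eF ^ 2 - (eH - 2) * eE ^ 2)))
       \<and> (\<forall>f. calg_hom racah_rels sl2_rels f
            \<and> f (cls racah_rels rA) = cls sl2_rels (scal (1/16) * ((eE + eF - 2) * (eE + eF + 2)))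
            \<and> f (cls racah_rels rB) = cls sl2_rels (scal (1/16) * ((eH - 2) * (eH + 2)))
            \<and> f (cls racah_rels rC) = cls sl2_rels (scal (1/16) *
                 ((scal \<i> * eE - scal \<i> * eF - 2) * (scal \<i> * eE - scal \<i> * eF + 2)))
            \<and> f (cls racah_rels rD) = cls sl2_rels (scal (1/64) *
                 ((eH + 2) * eF ^ 2 - (eH - 2) * eE ^ 2))
          \<longrightarrow> f (cls racah_rels r_alpha) = cls sl2_rels 0
            \<and> f (cls racah_rels r_beta) = cls sl2_rels 0
            \<and> f (cls racah_rels r_gamma) = cls sl2_rels 0
            \<and> f (cls racah_rels r_delta) = cls sl2_rels (scal (1/8) * (casimir - 6)))"
proof -
  have gens: "racah_sharp (cls racah_rels (gen a)) = Rep_usl2 (sharp_gen a)" for a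
    by (simp add: racah_sharp_cls usl2_scalars.free_lift_gen)
  show ?thesis (is "(\<exists>!f. ?P f) \<and> (\<forall>f. ?P f \<longrightarrow> ?Q f)")
  proof
    have sharp: "?P racah_sharp"
      using calg_hom_racah_sharp by (simp add: gens Rep_usl2_of)
    have unique: "f = racah_sharp" if "?P f" for f
    proof (rule calg_hom_eqI[OF _ calg_hom_racah_sharp])
      show "calg_hom racah_rels sl2_rels f"
        using that by blast
      show "f (cls racah_rels (gen a)) = racah_sharp (cls racah_rels (gen a))" for a
        using sharp that by (cases a) simp_all
    qed
    from sharp unique show "\<exists>!f. ?P f" by (rule ex1I)
    have "?Q racah_sharp"
      by (simp add: racah_sharp_cls sharp_r_alpha sharp_r_beta sharp_r_gamma sharp_r_delta
          zero_usl2_def Rep_usl2_of)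
    with unique show "\<forall>f. ?P f \<longrightarrow> ?Q f" by blast
  qed
qed

end
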